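(* Let $\bar\alpha\in[0,1]$ and $n\ge 1$. Every maximizer $\boldsymbol{\alpha}^*=(\alpha^*_1,\dots,\alpha^*_n)\in[0,1]^n$ of the problem $$\max_{\boldsymbol{\alpha}\in[0,1]^n} C(\boldsymbol{\alpha})\quad\text{subject to}\quad G(\boldsymbol{\alpha})=0$$ has at most one index $i$ with $\alpha^*_i\in(0,1)$.
   Context: Model of a road with $n\ge1$ parallel lanes of common length $d>0$. Vehicles have length $L>0$. A vehicle keeps a headway (space gap) $\bar h$ to the vehicle in front of it if both it and the vehicle in front are autonomous, and headway $h$ otherwise, where $0\le \bar h<h$. Vehicle types within a lane are i.i.d. Bernoulli: each vehicle in lane $i$ is autonomous with probability $\alpha_i\in[0,1]$ (the lane's autonomy level). Set $k_1=(L+h)/d$ and $k_2=(h-\bar h)/d$, so $k_1>k_2>0$ and $k_1-k_2=(L+\bar h)/d>0$. The capacity of a lane with autonomy level $\alpha\in[0,1]$ is $$c(\alpha)=\frac{1}{k_1-k_2\alpha^2}=\frac{d}{L+h-(h-\bar h)\alpha^2}.$$ Let $\bar\alpha\in[0,1]$ be the overall fraction of autonomous vehicles on the road. For $\boldsymbol{\alpha}=(\alpha_1,\dots,\alpha_n)\in[0,1]^n$ define $C(\boldsymbol{\alpha})=\sum_{i=1}^n c(\alpha_i)$ (total capacity) and $G(\boldsymbol{\alpha})=\sum_{i=1}^n(\alpha_i-\bar\alpha)c(\alpha_i)$; the constraint $G(\boldsymbol{\alpha})=0$ expresses that the overall autonomy level equals $\bar\alpha$. *)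

theory Defs
  imports "HOL-Analysis.Analysis"
begin

definition cap :: "real \<Rightarrow> real \<Rightarrow> real \<Rightarrow> real \<Rightarrow> real \<Rightarrow> real" where
  "cap d L h hbar a = d / (L + h - (h - hbar) * a ^ 2)"

definition totcap :: "real \<Rightarrow> real \<Rightarrow> real \<Rightarrow> real \<Rightarrow> nat \<Rightarrow> (nat \<Rightarrow> real) \<Rightarrow> real" where
  "totcap d L h hbar n \<alpha> = (\<Sum>i<n. cap d L h hbar (\<alpha> i))"

definition Gcon :: "real \<Rightarrow> real \<Rightarrow> real \<Rightarrow> real \<Rightarrow> real \<Rightarrow> nat \<Rightarrow> (nat \<Rightarrow> real) \<Rightarrow> real" where
  "Gcon d L h hbar abar n \<alpha> = (\<Sum>i<n. (\<alpha> i - abar) * cap d L h hbar (\<alpha> i))"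

definition feasible :: "real \<Rightarrow> real \<Rightarrow> real \<Rightarrow> real \<Rightarrow> real \<Rightarrow> nat \<Rightarrow> (nat \<Rightarrow> real) \<Rightarrow> bool" where
  "feasible d L h hbar abar n \<alpha> \<longleftrightarrow>
     (\<forall>i<n. 0 \<le> \<alpha> i \<and> \<alpha> i \<le> 1) \<and> Gcon d L h hbar abar n \<alpha> = 0"

definition is_maximizer :: "real \<Rightarrow> real \<Rightarrow> real \<Rightarrow> real \<Rightarrow> real \<Rightarrow> nat \<Rightarrow> (nat \<Rightarrow> real) \<Rightarrow> bool" where
  "is_maximizer d L h hbar abar n \<alpha> \<longleftrightarrow>
     feasible d L h hbar abar n \<alpha> \<and>
     (\<forall>\<beta>. feasible d L h hbar abar n \<beta> \<longrightarrow> totcap d L h hbar n \<beta> \<le> totcap d L h hbar n \<alpha>)"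

end

theory Submission
  imports Defs
begin

text \<open>
  With \<open>A = L + h > B = h - hbar > 0\<close>, lane capacity is \<open>c t = d / (A - B t\<^sup>2)\<close> and the
  constraint reads \<open>\<Sum> g(\<alpha>\<^sub>i) = 0\<close> for \<open>g t = (t - abar) c t\<close>. Both \<open>c\<close> and \<open>g\<close> increase on
  [0,1], and between \<open>u < v\<close> the increment of \<open>g\<close> is \<open>T(u,v) - abar\<close> times that of \<open>c\<close>,
  where the exchange rate \<open>T(u,v) = (A + B u v) / (B (u + v))\<close> exceeds 1 and decreases as
  the pair moves right. Two lanes with interior levels \<open>x \<le> y\<close> can be spread apart to
  \<open>x' < x \<le> y < y'\<close> keeping \<open>g x + g y\<close> fixed (intermediate value theorem). The loss of \<open>g\<close>
  on the left equals the gain on the right, but the left exchange rate \<open>T(x',x)\<close> is larger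
  than the right one \<open>T(y,y')\<close>, so capacity gains more on the right than it loses on the
  left, contradicting maximality.
\<close>

lemma quadratic_denominator_pos:
  fixes A B u :: real
  assumes "0 < B" "B < A" "0 \<le> u" "u \<le> 1"
  shows "0 < A - B * u^2"
proof -
  have "B * u^2 \<le> B" using assms by (simp add: power_le_one mult_left_le)
  then show ?thesis using assms by linarith
qed

definition secant_ratio :: "real \<Rightarrow> real \<Rightarrow> real \<Rightarrow> real \<Rightarrow> real" where
  "secant_ratio A B u v = (A + B * u * v) / (B * (u + v))"

lemma secant_ratio_identity:
  fixes A B d u v e :: real
  assumes nz_u: "A - B * u^2 \<noteq> 0" and nz_v: "A - B * v^2 \<noteq> 0" and nz: "B * (u + v) \<noteq> 0"
  shows "(v - e) * (d / (A - B * v^2)) - (u - e) * (d / (A - B * u^2))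
       = (secant_ratio A B u v - e) * (d / (A - B * v^2) - d / (A - B * u^2))"
proof -
  define Du Dv where "Du = A - B * u^2" and "Dv = A - B * v^2"
  have "(v - e) * Du - (u - e) * Dv = (A + B * u * v - e * (B * (u + v))) * (v - u)"
    unfolding Du_def Dv_def by (simp add: algebra_simps power2_eq_square)
  also have "\<dots> = (secant_ratio A B u v - e) * (Du - Dv)"
    using nz unfolding secant_ratio_def Du_def Dv_def by (simp add: field_simps power2_eq_square)
  finally have key: "(v - e) * Du - (u - e) * Dv = (secant_ratio A B u v - e) * (Du - Dv)" .
  have "(v - e) * (d / Dv) - (u - e) * (d / Du) = d * ((v - e) * Du - (u - e) * Dv) / (Du * Dv)"
    using nz_u nz_v unfolding Du_def Dv_def by (simp add: field_simps)
  also have "\<dots> = (secant_ratio A B u v - e) * (d / Dv - d / Du)"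
    unfolding key using nz_u nz_v unfolding Du_def Dv_def by (simp add: field_simps)
  finally show ?thesis unfolding Du_def Dv_def .
qed

lemma secant_ratio_gt_one:
  fixes A B u v :: real
  assumes "0 < B" "B < A" "0 \<le> u" "u < v" "v \<le> 1"
  shows "1 < secant_ratio A B u v"
proof -
  have "0 \<le> B * (1 - u) * (1 - v)" using assms by simp
  then have "B * (u + v) < A + B * u * v" using assms by (simp add: algebra_simps)
  then show ?thesis using assms unfolding secant_ratio_def by simp
qed

lemma secant_ratio_shift_right_less:
  fixes A B x y z :: real
  assumes "0 < B" "0 < A - B * y^2" "0 < x + y" "0 < y + z" "x < z"
  shows "secant_ratio A B y z < secant_ratio A B x y"
proof -
  have "(A + B * y * z) * (B * (x + y)) < (A + B * x * y) * (B * (y + z))"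
  proof -
    have "(A + B * x * y) * (B * (y + z)) - (A + B * y * z) * (B * (x + y))
        = B * (z - x) * (A - B * y^2)"
      by (simp add: algebra_simps power2_eq_square)
    moreover have "0 < B * (z - x) * (A - B * y^2)" using assms by simp
    ultimately show ?thesis by linarith
  qed
  then show ?thesis using assms unfolding secant_ratio_def by (simp add: divide_simps)
qed

lemma secant_ratio_decreasing:
  fixes A B x' x y y' :: real
  assumes "0 < B" "B < A" "0 \<le> x'" "x' < x" "x \<le> y" "y < y'" "y' \<le> 1"
  shows "secant_ratio A B y y' < secant_ratio A B x' x"
proof -
  have "secant_ratio A B x y < secant_ratio A B x' x"
    using assms quadratic_denominator_pos[of B A x] by (intro secant_ratio_shift_right_less) auto
  moreover have "secant_ratio A B y y' < secant_ratio A B x y"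
    using assms quadratic_denominator_pos[of B A y] by (intro secant_ratio_shift_right_less) auto
  ultimately show ?thesis by linarith
qed

context
  fixes A B d :: real and c :: "real \<Rightarrow> real"
  assumes c_def: "\<And>t. c t = d / (A - B * t^2)"
    and d_pos: "0 < d" and B_pos: "0 < B" and B_less_A: "B < A"
begin

lemma increment_ratio:
  assumes "0 \<le> u" "u < v" "v \<le> 1"
  shows "(v - e) * c v - (u - e) * c u = (secant_ratio A B u v - e) * (c v - c u)"
proof -
  have "A - B * u^2 \<noteq> 0" "A - B * v^2 \<noteq> 0" "B * (u + v) \<noteq> 0"
    using quadratic_denominator_pos[OF B_pos B_less_A, of u]
      quadratic_denominator_pos[OF B_pos B_less_A, of v] B_pos assms by auto
  then show ?thesis unfolding c_def by (rule secant_ratio_identity)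
qed

lemma capacity_strict_mono:
  assumes "0 \<le> u" "u < v" "v \<le> 1"
  shows "c u < c v"
proof -
  have "A - B * v^2 < A - B * u^2"
    using assms B_pos by (simp add: power_strict_mono)
  then show ?thesis
    unfolding c_def using assms d_pos quadratic_denominator_pos[OF B_pos B_less_A, of v]
    by (intro divide_strict_left_mono) auto
qed

lemma weighted_capacity_strict_mono:
  assumes "e \<le> 1"
  shows "strict_mono_on {0..1} (\<lambda>t. (t - e) * c t)"
proof (rule strict_mono_onI)
  fix u v :: real assume "u \<in> {0..1}" "v \<in> {0..1}" "u < v"
  then have "1 < secant_ratio A B u v" "c u < c v"
    using secant_ratio_gt_one[OF B_pos B_less_A] capacity_strict_mono by auto
  then have "0 < (secant_ratio A B u v - e) * (c v - c u)"
    using assms by simp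
  then show "(u - e) * c u < (v - e) * c v"
    using increment_ratio[of u v e] \<open>u \<in> {0..1}\<close> \<open>v \<in> {0..1}\<close> \<open>u < v\<close> by auto
qed

lemma weighted_capacity_continuous: "continuous_on {0..1} (\<lambda>t. (t - e) * c t)"
proof -
  have "\<forall>t\<in>{0..1}. A - B * t^2 \<noteq> 0"
    using quadratic_denominator_pos[OF B_pos B_less_A] by force
  then show ?thesis unfolding c_def by (intro continuous_intros) auto
qed

lemma spreading_increases_capacity:
  assumes "e \<le> 1" "0 \<le> x'" "x' < x" "x \<le> y" "y < y'" "y' \<le> 1"
    and same_weight: "(x' - e) * c x' + (y' - e) * c y' = (x - e) * c x + (y - e) * c y"
  shows "c x + c y < c x' + c y'"
proof -
  define T\<^sub>1 T\<^sub>2 where "T\<^sub>1 = secant_ratio A B x' x" and "T\<^sub>2 = secant_ratio A B y y'"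
  have rates: "(T\<^sub>1 - e) * (c x - c x') = (T\<^sub>2 - e) * (c y' - c y)"
    using increment_ratio[of x' x e] increment_ratio[of y y' e] assms
    unfolding T\<^sub>1_def T\<^sub>2_def by auto
  have "T\<^sub>2 < T\<^sub>1" "1 < T\<^sub>2"
    unfolding T\<^sub>1_def T\<^sub>2_def using assms secant_ratio_decreasing[OF B_pos B_less_A]
      secant_ratio_gt_one[OF B_pos B_less_A] by auto
  moreover have "0 < c x - c x'" using capacity_strict_mono assms by simp
  ultimately have "(T\<^sub>2 - e) * (c x - c x') < (T\<^sub>1 - e) * (c x - c x')"
    by (intro mult_strict_right_mono) auto
  also have "\<dots> = (T\<^sub>2 - e) * (c y' - c y)" by (rule rates)
  finally show ?thesis using \<open>1 < T\<^sub>2\<close> \<open>e \<le> 1\<close> by simp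
qed

end

lemma spread_preserving_sum:
  fixes g :: "real \<Rightarrow> real"
  assumes cont: "continuous_on {0..1} g" and mono: "strict_mono_on {0..1} g"
    and "0 < x" "x \<le> y" "y < 1"
  shows "\<exists>x' y'. 0 \<le> x' \<and> x' < x \<and> y < y' \<and> y' \<le> 1 \<and> g x' + g y' = g x + g y"
proof -
  have less: "g u < g v \<longleftrightarrow> u < v" if "u \<in> {0..1}" "v \<in> {0..1}" for u v
    using strict_mono_on_less[OF mono that] .
  have unit: "0 \<in> {0..1::real}" "1 \<in> {0..1::real}" "x \<in> {0..1}" "y \<in> {0..1}"
    using assms by auto
  have "g 0 < g x" "g x \<le> g y" "g y < g 1"
    using less[OF unit(1,3)] less[OF unit(4,2)] strict_mono_on_less_eq[OF mono unit(3,4)] assms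
    by auto
  show ?thesis
  proof (cases "g 0 \<le> g x + g y - g 1")
    case True
    moreover have "g x + g y - g 1 \<le> g 1" using \<open>g x \<le> g y\<close> \<open>g y < g 1\<close> by simp
    ultimately obtain x' where x': "0 \<le> x'" "x' \<le> 1" "g x' = g x + g y - g 1"
      using IVT'[of g 0 "g x + g y - g 1" 1, OF _ _ _ cont] by auto
    then have "g x' < g x" using \<open>g y < g 1\<close> by simp
    then have "x' < x" using less[of x' x] x' unit(3) by simp
    then show ?thesis using x' assms by (intro exI[of _ x'] exI[of _ 1]) simp
  next
    case False
    moreover have "g 0 \<le> g x + g y - g 0" using \<open>g 0 < g x\<close> \<open>g x \<le> g y\<close> by simp
    ultimately obtain y' where y': "0 \<le> y'" "y' \<le> 1" "g y' = g x + g y - g 0"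
      using IVT'[of g 0 "g x + g y - g 0" 1, OF _ _ _ cont] by auto
    then have "g y < g y'" using \<open>g 0 < g x\<close> by simp
    then have "y < y'" using less[of y y'] y' unit(4) by simp
    then show ?thesis using y' assms by (intro exI[of _ 0] exI[of _ y']) simp
  qed
qed

lemma sum_fun_upd2:
  fixes F :: "'a \<Rightarrow> 'b::comm_monoid_add"
  assumes "finite S" "i \<in> S" "j \<in> S" "i \<noteq> j"
  shows "(\<Sum>k\<in>S. F ((\<alpha>(i:=u, j:=v)) k)) + F (\<alpha> i) + F (\<alpha> j)
       = (\<Sum>k\<in>S. F (\<alpha> k)) + F u + F v"
proof -
  define R where "R = S - {i, j}"
  have S: "S = insert i (insert j R)" and "finite R" "i \<notin> insert j R" "j \<notin> R"
    using assms unfolding R_def by auto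
  then have split: "(\<Sum>k\<in>S. F (\<beta> k)) = F (\<beta> i) + F (\<beta> j) + (\<Sum>k\<in>R. F (\<beta> k))" for \<beta>
    by (simp add: add.assoc)
  have "(\<Sum>k\<in>R. F ((\<alpha>(i:=u, j:=v)) k)) = (\<Sum>k\<in>R. F (\<alpha> k))"
    using \<open>i \<notin> insert j R\<close> \<open>j \<notin> R\<close> by (intro sum.cong) auto
  then show ?thesis
    using split[of "\<alpha>(i:=u, j:=v)"] split[of \<alpha>] assms(4) by (simp add: ac_simps)
qed

lemma maximizer_pair_exchange:
  assumes max: "is_maximizer d L h hbar abar n \<alpha>" and "i < n" "j < n" "i \<noteq> j"
    and "0 \<le> u" "u \<le> 1" "0 \<le> v" "v \<le> 1"
    and same_weight: "(u - abar) * cap d L h hbar u + (v - abar) * cap d L h hbar v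
       = (\<alpha> i - abar) * cap d L h hbar (\<alpha> i) + (\<alpha> j - abar) * cap d L h hbar (\<alpha> j)"
  shows "cap d L h hbar u + cap d L h hbar v \<le> cap d L h hbar (\<alpha> i) + cap d L h hbar (\<alpha> j)"
proof -
  let ?\<beta> = "\<alpha>(i:=u, j:=v)"
  have lanes: "finite {..<n}" "i \<in> {..<n}" "j \<in> {..<n}" using assms by auto
  have "Gcon d L h hbar abar n ?\<beta> = Gcon d L h hbar abar n \<alpha>"
    using sum_fun_upd2[OF lanes \<open>i \<noteq> j\<close>, of "\<lambda>t. (t - abar) * cap d L h hbar t" \<alpha> u v]
      same_weight
    unfolding Gcon_def by linarith
  then have "feasible d L h hbar abar n ?\<beta>"
    using max assms unfolding is_maximizer_def feasible_def by auto
  then have "totcap d L h hbar n ?\<beta> \<le> totcap d L h hbar n \<alpha>"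
    using max unfolding is_maximizer_def by blast
  then show ?thesis
    using sum_fun_upd2[OF lanes \<open>i \<noteq> j\<close>, of "cap d L h hbar" \<alpha> u v]
    unfolding totcap_def by linarith
qed

lemma maximizer_no_two_interior:
  assumes "0 < d" "0 < L" "0 \<le> hbar" "hbar < h" "abar \<le> 1"
    and max: "is_maximizer d L h hbar abar n \<alpha>" and "i < n" "j < n" "i \<noteq> j"
    and "0 < \<alpha> i" "\<alpha> i \<le> \<alpha> j" "\<alpha> j < 1"
  shows False
proof -
  let ?c = "cap d L h hbar"
  have c_def: "\<And>t. ?c t = d / ((L + h) - (h - hbar) * t^2)" by (simp add: cap_def)
  have AB: "0 < h - hbar" "h - hbar < L + h" using assms by auto
  note facts = weighted_capacity_continuous[OF c_def \<open>0 < d\<close> AB]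
    weighted_capacity_strict_mono[OF c_def \<open>0 < d\<close> AB \<open>abar \<le> 1\<close>]
    spreading_increases_capacity[OF c_def \<open>0 < d\<close> AB \<open>abar \<le> 1\<close>]
  obtain x' y' where "0 \<le> x'" "x' < \<alpha> i" "\<alpha> j < y'" "y' \<le> 1"
    and same_weight: "(x' - abar) * ?c x' + (y' - abar) * ?c y'
       = (\<alpha> i - abar) * ?c (\<alpha> i) + (\<alpha> j - abar) * ?c (\<alpha> j)"
    using spread_preserving_sum[OF facts(1,2), of "\<alpha> i" "\<alpha> j"] assms by blast
  then have "?c (\<alpha> i) + ?c (\<alpha> j) < ?c x' + ?c y'"
    using assms by (intro facts(3)) auto
  moreover have "?c x' + ?c y' \<le> ?c (\<alpha> i) + ?c (\<alpha> j)"
    using maximizer_pair_exchange[OF max, of i j x' y'] same_weight \<open>0 \<le> x'\<close> \<open>x' < \<alpha> i\<close>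
      \<open>\<alpha> j < y'\<close> \<open>y' \<le> 1\<close> assms by auto
  ultimately show False by linarith
qed

theorem theorem1:
  fixes d L h hbar abar :: real and n :: nat and \<alpha> :: "nat \<Rightarrow> real"
  assumes "d > 0" and "L > 0" and "0 \<le> hbar" and "hbar < h"
    and "0 \<le> abar" and "abar \<le> 1" and "n \<ge> 1"
    and "is_maximizer d L h hbar abar n \<alpha>"
  shows "card {i. i < n \<and> 0 < \<alpha> i \<and> \<alpha> i < 1} \<le> 1"
proof -
  have "a = b"
    if "a \<in> {i. i < n \<and> 0 < \<alpha> i \<and> \<alpha> i < 1}" "b \<in> {i. i < n \<and> 0 < \<alpha> i \<and> \<alpha> i < 1}" for a b
    using maximizer_no_two_interior[OF assms(1-4,6,8), of a b]
      maximizer_no_two_interior[OF assms(1-4,6,8), of b a] that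
    by (cases "\<alpha> a \<le> \<alpha> b") auto
  then show ?thesis by (simp add: card_le_Suc0_iff_eq)
qed

end
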